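(* Let $\mathcal{P}=\{1,\dots,N\}$ and consider the family of systems $\dot x(t)=f_i(x(t))$, $i\in\mathcal{P}$, on $\mathbb{R}^d$, where each $f_i:\mathbb{R}^d\to\mathbb{R}^d$ is Lipschitz with $f_i(0)=0$. Let $\mathcal{P}=\mathcal{P}_S\sqcup\mathcal{P}_U$, and let $E(\mathcal{P})\subset\mathcal{P}\times\mathcal{P}$ be a set of admissible transitions. Suppose: (A1) there exist $\underline\alpha,\overline\alpha\in\mathcal{K}_\infty$, continuously differentiable functions $V_i:\mathbb{R}^d\to[0,+\infty[$, $i\in\mathcal{P}$, and constants $\lambda_i\in\mathbb{R}$ with $\lambda_i>0$ for $i\in\mathcal{P}_S$ and $\lambda_i<0$ for $i\in\mathcal{P}_U$, such that $\underline\alpha(\|\xi\|)\le V_i(\xi)\le\overline\alpha(\|\xi\|)$ for all $\xi\in\mathbb{R}^d$, $i\in\mathcal{P}$, and $V_i(\gamma_i(t))\le V_i(\gamma_i(0))\exp(-\lambda_i t)$ for all $t\ge0$ and every solution $\gamma_i$ of $\dot x=f_i(x)$; (A2) for every $(i,j)\in E(\mathcal{P})$ there is $\mu_{ij}\ge1$ with $V_j(\xi)\le\mu_{ij}V_i(\xi)$ for all $\xi\in\mathbb{R}^d$. Then for every admissible switching signal $\sigma$ satisfying \[ \varlimsup_{t\to+\infty}\Biggl(\nu(t)\sum_{(k,\ell)\in E(\mathcal{P})}(\ln\mu_{k\ell})\rho_{k\ell}(t)-\sum_{j\in\mathcal{P}_S}|\lambda_j|\eta_j(t)+\sum_{k\in\mathcal{P}_U}|\lambda_k|\eta_k(t)\Biggr)<0,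 \] the switched system $\dot x(t)=f_{\sigma(t)}(x(t))$, $x(0)=x_0$, $t\ge0$, is globally asymptotically stable.
   Context: An admissible switching signal is a piecewise constant, right-continuous map $\sigma:[0,+\infty[\to\mathcal{P}$ with left limits everywhere, whose jumps (switching instants $0=:\tau_0<\tau_1<\tau_2<\cdots$) are only along admissible transitions, i.e. $(\sigma(\tau_{i}),\sigma(\tau_{i+1}))\in E(\mathcal{P})$. $\mathcal{P}_S$ and $\mathcal{P}_U$ are the index sets of asymptotically stable and unstable subsystems respectively. $\mathrm{N}(s,t)$ is the number of switches on $]s,t]$; $\mathrm{N}_{k\ell}(0,t)$ is the number of switches from subsystem $k$ to subsystem $\ell$ in $]0,t]$; $\mathrm{T}_j(0,t)$ is the Lebesgue measure of the set of times in $]0,t]$ at which $\sigma=j$. For $t>0$: $\nu(t)=\mathrm{N}(0,t)/t$ (switching frequency), $\rho_{k\ell}(t)=\mathrm{N}_{k\ell}(0,t)/\mathrm{N}(0,t)$ (transition frequency), and $\eta_j(t)=\mathrm{T}_j(0,t)/t$ (fraction of activation); the product $\nu(t)\rho_{k\ell}(t)$ equals $\mathrm{N}_{k\ell}(0,t)/t$. The switched system is globally asymptotically stable (GAS) for $\sigma$ if it is Lyapunov stable and every solution converges to $0$ as $t\to+\infty$, i.e., there is a class-$\mathcal{KL}$ function $\beta_\sigma$ with $\|x(t)\|\le\beta_\sigma(\|x_0\|,t)$ for all $x_0$ and $t\ge0$. *)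

theory Defs
  imports "HOL-Analysis.Analysis"
begin

definition class_K :: "(real \<Rightarrow> real) \<Rightarrow> bool" where
  "class_K \<alpha> \<longleftrightarrow> continuous_on {0..} \<alpha> \<and> \<alpha> 0 = 0 \<and> strict_mono_on {0..} \<alpha>"

definition class_Kinf :: "(real \<Rightarrow> real) \<Rightarrow> bool" where
  "class_Kinf \<alpha> \<longleftrightarrow> class_K \<alpha> \<and> filterlim \<alpha> at_top at_top"

definition class_KL :: "(real \<Rightarrow> real \<Rightarrow> real) \<Rightarrow> bool" where
  "class_KL \<beta> \<longleftrightarrow>
     (\<forall>s\<ge>0. class_K (\<lambda>r. \<beta> r s)) \<and>
     (\<forall>r\<ge>0. (\<forall>s u. 0 \<le> s \<longrightarrow> s \<le> u \<longrightarrow> \<beta> r u \<le> \<beta> r s) \<and> ((\<beta> r) \<longlongrightarrow> 0) at_top)"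

definition ode_solution :: "('a::real_normed_vector \<Rightarrow> 'a) \<Rightarrow> (real \<Rightarrow> 'a) \<Rightarrow> bool" where
  "ode_solution g \<gamma> \<longleftrightarrow>
     (\<forall>t\<ge>0. (\<gamma> has_vector_derivative g (\<gamma> t)) (at t within {0..}))"

definition left_val :: "(real \<Rightarrow> nat) \<Rightarrow> real \<Rightarrow> nat" where
  "left_val \<sigma> s = (THE c. \<exists>e>0. \<forall>u\<in>{s-e<..<s}. \<sigma> u = c)"

definition is_switch :: "(real \<Rightarrow> nat) \<Rightarrow> real \<Rightarrow> bool" where
  "is_switch \<sigma> s \<longleftrightarrow> s > 0 \<and> left_val \<sigma> s \<noteq> \<sigma> s"

text \<open>Admissible switching signal: values in P, piecewise constant, right-continuous,
  with left limits everywhere (locally constant on both one-sided neighbourhoods, hence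
  only finitely many switches on bounded intervals), jumps only along E.\<close>
definition admissible_signal ::
  "nat set \<Rightarrow> (nat \<times> nat) set \<Rightarrow> (real \<Rightarrow> nat) \<Rightarrow> bool" where
  "admissible_signal P E \<sigma> \<longleftrightarrow>
     (\<forall>t\<ge>0. \<sigma> t \<in> P) \<and>
     (\<forall>t\<ge>0. \<exists>e>0. \<forall>u\<in>{t..<t+e}. \<sigma> u = \<sigma> t) \<and>
     (\<forall>t>0. \<exists>e>0. \<exists>c. \<forall>u\<in>{t-e<..<t}. \<sigma> u = c) \<and>
     (\<forall>t. is_switch \<sigma> t \<longrightarrow> (left_val \<sigma> t, \<sigma> t) \<in> E)"

definition num_switches :: "(real \<Rightarrow> nat) \<Rightarrow> real \<Rightarrow> nat" where
  "num_switches \<sigma> t = card {s\<in>{0<..t}. is_switch \<sigma> s}"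

definition num_switches_from_to :: "(real \<Rightarrow> nat) \<Rightarrow> nat \<Rightarrow> nat \<Rightarrow> real \<Rightarrow> nat" where
  "num_switches_from_to \<sigma> k l t =
     card {s\<in>{0<..t}. is_switch \<sigma> s \<and> left_val \<sigma> s = k \<and> \<sigma> s = l}"

definition activation_time :: "(real \<Rightarrow> nat) \<Rightarrow> nat \<Rightarrow> real \<Rightarrow> real" where
  "activation_time \<sigma> j t = measure lborel {s\<in>{0<..t}. \<sigma> s = j}"

definition switch_freq :: "(real \<Rightarrow> nat) \<Rightarrow> real \<Rightarrow> real" where
  "switch_freq \<sigma> t = real (num_switches \<sigma> t) / t"

definition trans_freq :: "(real \<Rightarrow> nat) \<Rightarrow> nat \<Rightarrow> nat \<Rightarrow> real \<Rightarrow> real" where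
  "trans_freq \<sigma> k l t = real (num_switches_from_to \<sigma> k l t) / real (num_switches \<sigma> t)"

definition activation_frac :: "(real \<Rightarrow> nat) \<Rightarrow> nat \<Rightarrow> real \<Rightarrow> real" where
  "activation_frac \<sigma> j t = activation_time \<sigma> j t / t"

text \<open>Solution of x' = f_sigma(t)(x), x(0) = x0 on [0,+infinity): continuous, and
  at every t the right derivative equals f_sigma(t)(x(t)) (sigma is right-continuous
  and piecewise constant).\<close>
definition switched_solution ::
  "(nat \<Rightarrow> 'a::real_normed_vector \<Rightarrow> 'a) \<Rightarrow> (real \<Rightarrow> nat) \<Rightarrow> 'a \<Rightarrow> (real \<Rightarrow> 'a) \<Rightarrow> bool" where
  "switched_solution f \<sigma> x0 x \<longleftrightarrow>
     x 0 = x0 \<and> continuous_on {0..} x \<and>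
     (\<forall>t\<ge>0. (x has_vector_derivative f (\<sigma> t) (x t)) (at t within {t..}))"

definition GAS :: "(nat \<Rightarrow> 'a::real_normed_vector \<Rightarrow> 'a) \<Rightarrow> (real \<Rightarrow> nat) \<Rightarrow> bool" where
  "GAS f \<sigma> \<longleftrightarrow>
     (\<exists>\<beta>. class_KL \<beta> \<and>
        (\<forall>x0 x. switched_solution f \<sigma> x0 x \<longrightarrow> (\<forall>t\<ge>0. norm (x t) \<le> \<beta> (norm x0) t)))"

end

(*
  Along a solution x, the value W(t) = V_sigma(t)(x(t)) satisfies W(t) <= W(0) exp(B(t)) with
  B(t) = sum over (k,l) in E of ln(mu_kl) N_kl(0,t) - sum over j of lam_j T_j(0,t).
  Between switches V_i decays at rate lam_i: differentiating (A1) at time 0 gives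
  DV_i(xi)(f_i(xi)) <= -lam_i V_i(xi), which only needs a solution of the Lipschitz system through
  every point xi; a comparison argument with right derivatives then brings the estimate back to the
  switched solution. At a switch k -> l the value is multiplied by at most mu_kl by (A2).
  Since B(t)/t is the quantity under the limsup, B(t) <= K - c t for some c > 0, and the class K_inf
  bounds turn W(t) <= alpha_u(|x0|) exp(K - c t) into a KL estimate of |x(t)|.
*)

theory Submission
  imports Defs "HOL-Real_Asymp.Real_Asymp"
begin

section \<open>Solutions of Lipschitz differential equations\<close>

text \<open>Time is clamped to \<open>[0, h]\<close>, so the Picard operator acts on bounded continuous functions on
  the whole real line and Banach's fixed point theorem applies in \<open>real \<Rightarrow>\<^sub>C 'a\<close>.\<close>

definition picard_map :: "('a::euclidean_space \<Rightarrow> 'a) \<Rightarrow> 'a \<Rightarrow> real \<Rightarrow> (real \<Rightarrow> 'a) \<Rightarrow> real \<Rightarrow> 'a"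
  where "picard_map g \<xi> h \<phi> t = \<xi> + integral {0..max 0 (min h t)} (\<lambda>s. g (\<phi> (max 0 (min h s))))"

definition integral_solution :: "('a::euclidean_space \<Rightarrow> 'a) \<Rightarrow> 'a \<Rightarrow> real \<Rightarrow> (real \<Rightarrow> 'a) \<Rightarrow> bool"
  where "integral_solution g \<xi> T \<phi> \<longleftrightarrow>
    continuous_on {0..T} \<phi> \<and> (\<forall>t\<in>{0..T}. \<phi> t = \<xi> + integral {0..t} (\<lambda>s. g (\<phi> s)))"

lemma continuous_on_clamped_integrand:
  fixes g :: "'a::euclidean_space \<Rightarrow> 'a"
    and \<phi> :: "real \<Rightarrow>\<^sub>C 'a"
  assumes "continuous_on UNIV g"
  shows "continuous_on UNIV (\<lambda>s. g (apply_bcontfun \<phi> (max 0 (min h s))))"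
proof -
  have "continuous_on UNIV (\<lambda>s. max 0 (min h s))" by (intro continuous_intros)
  then show ?thesis
    by (intro continuous_on_compose2[OF assms] continuous_on_compose2[OF continuous_on_apply_bcontfun]) auto
qed

lemma picard_map_bcontfun:
  fixes g :: "'a::euclidean_space \<Rightarrow> 'a"
  assumes g: "continuous_on UNIV g" and h: "0 \<le> h"
  shows "picard_map g \<xi> h (apply_bcontfun \<phi>) \<in> bcontfun"
proof -
  define F where "F u = \<xi> + integral {0..u} (\<lambda>s. g (apply_bcontfun \<phi> (max 0 (min h s))))" for u
  have F: "continuous_on {0..h} F"
    unfolding F_def
    by (intro continuous_intros indefinite_integral_continuous_1 integrable_continuous_real
        continuous_on_subset[OF continuous_on_clamped_integrand[OF g]]) auto
  have eq: "picard_map g \<xi> h (apply_bcontfun \<phi>) = F \<circ> (\<lambda>t. max 0 (min h t))"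
    by (auto simp: picard_map_def F_def)
  have "continuous_on UNIV (F \<circ> (\<lambda>t. max 0 (min h t)))"
    by (intro continuous_on_compose continuous_on_subset[OF F] continuous_intros) (use h in auto)
  moreover have "range (F \<circ> (\<lambda>t. max 0 (min h t))) \<subseteq> F ` {0..h}"
    using h by auto
  moreover have "bounded (F ` {0..h})"
    by (intro compact_imp_bounded compact_continuous_image F) auto
  ultimately show ?thesis
    unfolding eq bcontfun_def by (auto intro: bounded_subset)
qed

lemma picard_map_dist:
  fixes g :: "'a::euclidean_space \<Rightarrow> 'a"
  assumes lip: "L-lipschitz_on UNIV g" and h: "0 \<le> h"
  shows "dist (picard_map g \<xi> h (apply_bcontfun \<phi>) t) (picard_map g \<xi> h (apply_bcontfun \<psi>) t)
    \<le> (L * h) * dist \<phi> \<psi>"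
proof -
  have L: "0 \<le> L" using lip by (auto simp: lipschitz_on_def)
  have g: "continuous_on UNIV g" using lip by (rule lipschitz_on_continuous_on)
  define c where "c = max 0 (min h t)"
  have c: "0 \<le> c" "c \<le> h" using h by (auto simp: c_def)
  let ?d = "\<lambda>s. g (apply_bcontfun \<phi> (max 0 (min h s))) - g (apply_bcontfun \<psi> (max 0 (min h s)))"
  have int: "(\<lambda>s. g (apply_bcontfun \<theta> (max 0 (min h s)))) integrable_on {0..c}" for \<theta>
    by (intro integrable_continuous_real continuous_on_subset[OF continuous_on_clamped_integrand[OF g]]) auto
  have "dist (picard_map g \<xi> h (apply_bcontfun \<phi>) t) (picard_map g \<xi> h (apply_bcontfun \<psi>) t)
      = norm (integral {0..c} ?d)"
    unfolding picard_map_def dist_norm c_def[symmetric] by (simp add: integral_diff[OF int int])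
  also have "\<dots> \<le> (L * dist \<phi> \<psi>) * (c - 0)"
  proof (rule integral_bound)
    show "continuous_on {0..c} ?d"
      by (intro continuous_intros continuous_on_subset[OF continuous_on_clamped_integrand[OF g]]) auto
    fix s
    have "norm (?d s) \<le> L * dist (apply_bcontfun \<phi> (max 0 (min h s))) (apply_bcontfun \<psi> (max 0 (min h s)))"
      using lip by (auto simp: lipschitz_on_def dist_norm)
    also have "\<dots> \<le> L * dist \<phi> \<psi>" by (rule mult_left_mono[OF dist_bounded L])
    finally show "norm (?d s) \<le> L * dist \<phi> \<psi>" .
  qed (use c in auto)
  also have "\<dots> \<le> (L * h) * dist \<phi> \<psi>"
    using mult_left_mono[OF c(2), of "L * dist \<phi> \<psi>"] L by (simp add: ac_simps)
  finally show ?thesis .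
qed

lemma picard_local_solution:
  fixes g :: "'a::euclidean_space \<Rightarrow> 'a"
  assumes lip: "L-lipschitz_on UNIV g" and h: "0 < h" "L * h < 1"
  shows "\<exists>\<phi>. integral_solution g \<xi> h \<phi>"
proof -
  have g: "continuous_on UNIV g" using lip by (rule lipschitz_on_continuous_on)
  have L: "0 \<le> L" using lip by (auto simp: lipschitz_on_def)
  define P where "P \<phi> = Bcontfun (picard_map g \<xi> h (apply_bcontfun \<phi>))" for \<phi>
  have P: "apply_bcontfun (P \<phi>) = picard_map g \<xi> h (apply_bcontfun \<phi>)" for \<phi>
    unfolding P_def using picard_map_bcontfun[OF g] h by (simp add: Bcontfun_inverse)
  have "dist (P \<phi>) (P \<psi>) \<le> (L * h) * dist \<phi> \<psi>" for \<phi> \<psi>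
    by (rule dist_bound) (use picard_map_dist[OF lip] h in \<open>simp add: P\<close>)
  then obtain \<phi> where fixp: "P \<phi> = \<phi>"
    using banach_fix_type[of "L * h" P] L h by auto
  have "apply_bcontfun \<phi> t = \<xi> + integral {0..t} (\<lambda>s. g (apply_bcontfun \<phi> s))" if t: "t \<in> {0..h}" for t
  proof -
    have "apply_bcontfun \<phi> t = picard_map g \<xi> h (apply_bcontfun \<phi>) t"
      using fixp by (metis P)
    also have "\<dots> = \<xi> + integral {0..t} (\<lambda>s. g (apply_bcontfun \<phi> (max 0 (min h s))))"
      using t by (simp add: picard_map_def)
    also have "integral {0..t} (\<lambda>s. g (apply_bcontfun \<phi> (max 0 (min h s))))
        = integral {0..t} (\<lambda>s. g (apply_bcontfun \<phi> s))"
      using t by (intro integral_cong) auto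
    finally show ?thesis .
  qed
  then show ?thesis
    by (intro exI[of _ "apply_bcontfun \<phi>"]) (auto simp: integral_solution_def continuous_on_apply_bcontfun)
qed

lemma integral_solutionD:
  assumes "integral_solution g \<xi> T \<phi>"
  shows "continuous_on {0..T} \<phi>"
    and "t \<in> {0..T} \<Longrightarrow> \<phi> t = \<xi> + integral {0..t} (\<lambda>s. g (\<phi> s))"
  using assms by (auto simp: integral_solution_def)

lemma integral_solution_start:
  assumes "integral_solution g \<xi> T \<phi>" "0 \<le> T"
  shows "\<phi> 0 = \<xi>"
  using integral_solutionD(2)[OF assms(1), of 0] assms(2) by simp

lemma integral_solution_has_vector_derivative:
  fixes g :: "'a::euclidean_space \<Rightarrow> 'a"
  assumes g: "continuous_on UNIV g" and \<phi>: "integral_solution g \<xi> T \<phi>" and t: "t \<in> {0..T}"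
  shows "(\<phi> has_vector_derivative g (\<phi> t)) (at t within {0..T})"
proof -
  have "continuous_on {0..T} (\<lambda>s. g (\<phi> s))"
    using integral_solutionD(1)[OF \<phi>] by (auto intro: continuous_on_compose2[OF g])
  from has_vector_derivative_add[OF has_vector_derivative_const integral_has_vector_derivative[OF this t]]
  have "((\<lambda>u. \<xi> + integral {0..u} (\<lambda>s. g (\<phi> s))) has_vector_derivative g (\<phi> t)) (at t within {0..T})"
    by simp
  then show ?thesis
    by (rule has_vector_derivative_transform[rotated 2]) (use integral_solutionD(2)[OF \<phi>] t in auto)
qed

lemma continuous_on_concat:
  fixes \<phi> \<psi> :: "real \<Rightarrow> 'a::topological_space"
  assumes \<phi>: "continuous_on {0..a} \<phi>" and \<psi>: "continuous_on {0..h} \<psi>"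
    and "\<psi> 0 = \<phi> a" "0 \<le> a" "0 \<le> h"
  shows "continuous_on {0..a + h} (\<lambda>t. if t \<le> a then \<phi> t else \<psi> (t - a))"
proof -
  have "continuous_on {a..a + h} (\<lambda>t. t - a)" by (intro continuous_intros)
  then have "continuous_on {a..a + h} (\<lambda>t. \<psi> (t - a))"
    by (rule continuous_on_compose2[OF \<psi>]) auto
  then have "continuous_on {a..a + h} (\<lambda>t. if t \<le> a then \<phi> t else \<psi> (t - a))"
    by (rule continuous_on_eq) (use assms(3) in \<open>auto simp: antisym\<close>)
  moreover have "continuous_on {0..a} (\<lambda>t. if t \<le> a then \<phi> t else \<psi> (t - a))"
    using \<phi> by (rule continuous_on_eq) auto
  moreover have "{0..a} \<union> {a..a + h} = {0..a + h}" using assms(4,5) by auto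
  ultimately show ?thesis using continuous_on_closed_Un[of "{0..a}" "{a..a + h}"] by fastforce
qed

lemma integral_solution_append:
  fixes g :: "'a::euclidean_space \<Rightarrow> 'a"
  assumes g: "continuous_on UNIV g" and a: "0 \<le> a" and h: "0 \<le> h"
    and \<phi>: "integral_solution g \<xi> a \<phi>" and \<psi>: "integral_solution g (\<phi> a) h \<psi>"
  shows "integral_solution g \<xi> (a + h) (\<lambda>t. if t \<le> a then \<phi> t else \<psi> (t - a))"
    (is "integral_solution g \<xi> (a + h) ?\<chi>")
proof -
  have right: "?\<chi> t = \<psi> (t - a)" if "a \<le> t" for t
    using that integral_solution_start[OF \<psi> h] by (cases "t = a") auto
  have cont: "continuous_on {0..a + h} ?\<chi>"
    using integral_solutionD(1)[OF \<phi>] integral_solutionD(1)[OF \<psi>] integral_solution_start[OF \<psi> h] a h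
    by (rule continuous_on_concat)
  have "continuous_on {0..a + h} (\<lambda>s. g (?\<chi> s))"
    by (rule continuous_on_compose2[OF g cont]) auto
  then have int: "(\<lambda>s. g (?\<chi> s)) integrable_on {0..t}" if "t \<le> a + h" for t
    using that by (intro integrable_continuous_real) (auto elim: continuous_on_subset)
  have eq: "?\<chi> t = \<xi> + integral {0..t} (\<lambda>s. g (?\<chi> s))" if t: "t \<in> {0..a + h}" for t
  proof (cases "t \<le> a")
    case True
    then have "?\<chi> t = \<xi> + integral {0..t} (\<lambda>s. g (\<phi> s))"
      using integral_solutionD(2)[OF \<phi>, of t] t by simp
    also have "integral {0..t} (\<lambda>s. g (\<phi> s)) = integral {0..t} (\<lambda>s. g (?\<chi> s))"
      using True by (intro integral_cong) auto
    finally show ?thesis .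
  next
    case False
    have "?\<chi> t = \<phi> a + integral {0..t - a} (\<lambda>s. g (\<psi> s))"
      using integral_solutionD(2)[OF \<psi>, of "t - a"] False t by simp
    also have "\<phi> a = \<xi> + integral {0..a} (\<lambda>s. g (\<phi> s))"
      using integral_solutionD(2)[OF \<phi>, of a] a by simp
    also have "integral {0..a} (\<lambda>s. g (\<phi> s)) = integral {0..a} (\<lambda>s. g (?\<chi> s))"
      by (intro integral_cong) auto
    also have "integral {0..t - a} (\<lambda>s. g (\<psi> s)) = integral {a..t} (\<lambda>s. g (\<psi> (s - a)))"
      using integral_shift_Icc_real[of 0 "t - a" "\<lambda>s. g (\<psi> (s - a))" a] by (simp add: o_def)
    also have "\<dots> = integral {a..t} (\<lambda>s. g (?\<chi> s))"
      by (intro integral_cong) (auto simp: right)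
    also have "\<xi> + integral {0..a} (\<lambda>s. g (?\<chi> s)) + integral {a..t} (\<lambda>s. g (?\<chi> s))
        = \<xi> + integral {0..t} (\<lambda>s. g (?\<chi> s))"
      using Henstock_Kurzweil_Integration.integral_combine[OF a _ int, of t] False t
      by (simp add: add.assoc)
    finally show ?thesis .
  qed
  show ?thesis unfolding integral_solution_def using cont eq by blast
qed

lemma nested_integral_solutions:
  fixes g :: "'a::euclidean_space \<Rightarrow> 'a"
  assumes lip: "L-lipschitz_on UNIV g" and h: "0 < h" "L * h < 1"
  obtains \<phi> where "\<And>n. integral_solution g \<xi> (real n * h) (\<phi> n)"
    and "\<And>n m t. n \<le> m \<Longrightarrow> t \<in> {0..real n * h} \<Longrightarrow> \<phi> m t = \<phi> n t"
proof -
  have g: "continuous_on UNIV g" using lip by (rule lipschitz_on_continuous_on)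
  define loc where "loc \<eta> = (SOME \<psi>. integral_solution g \<eta> h \<psi>)" for \<eta>
  have loc: "integral_solution g \<eta> h (loc \<eta>)" for \<eta>
    unfolding loc_def using picard_local_solution[OF lip h] by (rule someI_ex)
  define \<phi> where "\<phi> = rec_nat (\<lambda>t. \<xi>)
    (\<lambda>n \<phi>\<^sub>n t. if t \<le> real n * h then \<phi>\<^sub>n t else loc (\<phi>\<^sub>n (real n * h)) (t - real n * h))"
  have \<phi>_Suc: "\<phi> (Suc n) = (\<lambda>t. if t \<le> real n * h then \<phi> n t else loc (\<phi> n (real n * h)) (t - real n * h))"
    for n unfolding \<phi>_def by simp
  have "integral_solution g \<xi> (real n * h) (\<phi> n)" for n
  proof (induction n)
    case 0
    then show ?case by (simp add: \<phi>_def integral_solution_def)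
  next
    case (Suc n)
    have "integral_solution g \<xi> (real n * h + h) (\<phi> (Suc n))"
      unfolding \<phi>_Suc using h by (intro integral_solution_append[OF g _ _ Suc loc]) auto
    then show ?case by (simp add: algebra_simps)
  qed
  moreover have "\<phi> m t = \<phi> n t" if "n \<le> m" "t \<in> {0..real n * h}" for n m t
    using that(1)
  proof (induction m)
    case (Suc m)
    show ?case
    proof (cases "n = Suc m")
      case False
      with Suc.prems have "n \<le> m" by simp
      moreover have "real n * h \<le> real m * h" using \<open>n \<le> m\<close> h by (simp add: mult_right_mono)
      ultimately show ?thesis using Suc.IH that(2) by (simp add: \<phi>_Suc)
    qed simp
  qed simp
  ultimately show ?thesis by (rule that)
qed

lemma lipschitz_ode_solution_exists:
  fixes g :: "'a::euclidean_space \<Rightarrow> 'a"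
  assumes lip: "L-lipschitz_on UNIV g"
  shows "\<exists>\<gamma>. ode_solution g \<gamma> \<and> \<gamma> 0 = \<xi>"
proof -
  have g: "continuous_on UNIV g" using lip by (rule lipschitz_on_continuous_on)
  have L: "0 \<le> L" using lip by (auto simp: lipschitz_on_def)
  define h :: real where "h = 1 / (2 * (L + 1))"
  have h: "0 < h" "L * h < 1" using L by (auto simp: h_def field_simps)
  obtain \<phi> where sol: "\<And>n. integral_solution g \<xi> (real n * h) (\<phi> n)"
    and ext: "\<And>n m t. n \<le> m \<Longrightarrow> t \<in> {0..real n * h} \<Longrightarrow> \<phi> m t = \<phi> n t"
    using nested_integral_solutions[OF lip h] by blast
  define n :: "real \<Rightarrow> nat" where "n t = nat \<lceil>t / h\<rceil>" for t
  have n: "t \<le> real (n t) * h" for t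
    using h real_nat_ceiling_ge[of "t / h"] by (simp add: n_def field_simps)
  define \<gamma> where "\<gamma> t = \<phi> (n t) t" for t
  have \<gamma>: "\<gamma> t = \<phi> m t" if "t \<in> {0..real m * h}" for t m
    using ext[of m "max m (n t)" t] ext[of "n t" "max m (n t)" t] that n[of t] by (simp add: \<gamma>_def)
  have "(\<gamma> has_vector_derivative g (\<gamma> t)) (at t within {0..})" if t: "0 \<le> t" for t
  proof -
    define m where "m = n (t + 1)"
    have tm: "t < real m * h" using n[of "t + 1"] by (simp add: m_def)
    have "(\<phi> m has_vector_derivative g (\<phi> m t)) (at t within {0..real m * h})"
      using integral_solution_has_vector_derivative[OF g sol] t tm by simp
    then have "(\<gamma> has_vector_derivative g (\<phi> m t)) (at t within {0..real m * h})"
      by (rule has_vector_derivative_transform[rotated 2]) (use t tm in \<open>auto simp: \<gamma>\<close>)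
    moreover have "\<gamma> t = \<phi> m t" using t tm by (simp add: \<gamma>)
    moreover have "at t within {0..real m * h} = at t within {0..}"
      by (rule at_within_nhd[where S="{..<real m * h}"]) (use t tm in auto)
    ultimately show ?thesis by metis
  qed
  moreover have "\<gamma> 0 = \<xi>"
    using \<gamma>[of 0 0] integral_solution_start[OF sol[of 0]] by simp
  ultimately show ?thesis by (auto simp: ode_solution_def)
qed

section \<open>One-sided arguments on the real line\<close>

lemma real_continuous_induct:
  fixes a b :: real
  assumes ab: "a \<le> b" and start: "P a"
    and left: "\<And>s. a < s \<Longrightarrow> s \<le> b \<Longrightarrow> \<forall>u\<in>{a..<s}. P u \<Longrightarrow> P s"
    and right: "\<And>s. a \<le> s \<Longrightarrow> s < b \<Longrightarrow> \<forall>u\<in>{a..s}. P u \<Longrightarrow> \<exists>e>0. \<forall>u\<in>{s<..s + e}. P u"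
  shows "P b"
proof -
  define S where "S = {t\<in>{a..b}. \<forall>u\<in>{a..t}. P u}"
  have aS: "a \<in> S" using ab start by (auto simp: S_def)
  have bdd: "bdd_above S" by (auto simp: S_def bdd_above_def)
  define s where "s = Sup S"
  have s: "a \<le> s" "s \<le> b"
    unfolding s_def using aS bdd by (auto intro!: cSup_upper cSup_least simp: S_def)
  have below: "P u" if "u \<in> {a..<s}" for u
  proof -
    have "u < Sup S" using that by (simp add: s_def)
    then obtain t where "t \<in> S" "u < t" using less_cSup_iff[OF _ bdd] aS by blast
    then show ?thesis using that by (auto simp: S_def)
  qed
  have Ps: "P s" using start below left s by (cases "s = a") auto
  have "s = b"
  proof (rule ccontr)
    assume "s \<noteq> b"
    then obtain e where e: "e > 0" "\<forall>u\<in>{s<..s + e}. P u"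
      using right[of s] s below Ps by force
    have "P u" if "u \<in> {a..s + e}" for u
      using that below Ps e(2) by (cases u s rule: linorder_cases) auto
    then have "min (s + e) b \<in> S" using s e by (auto simp: S_def)
    then have "min (s + e) b \<le> s" unfolding s_def using bdd by (rule cSup_upper)
    then show False using s e \<open>s \<noteq> b\<close> by linarith
  qed
  with Ps show ?thesis by simp
qed

lemma isCont_le_at_left:
  fixes F G :: "real \<Rightarrow> real"
  assumes "a < s" "isCont F s" "isCont G s" "\<And>u. u \<in> {a<..<s} \<Longrightarrow> F u \<le> G u"
  shows "F s \<le> G s"
proof (rule tendsto_le[OF trivial_limit_at_left_real])
  show "(F \<longlongrightarrow> F s) (at_left s)" "(G \<longlongrightarrow> G s) (at_left s)"
    using assms(2,3) by (simp_all add: isCont_def filterlim_at_split)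
  show "eventually (\<lambda>u. F u \<le> G u) (at_left s)"
    by (rule eventually_mono[OF eventually_at_left_real[OF assms(1)] assms(4)])
qed

text \<open>The slack \<open>c (v - a)\<close> makes the right derivative strictly negative, as the right step
  of the continuous induction requires.\<close>

lemma nonincreasing_if_right_derivative_nonpos:
  fixes g :: "real \<Rightarrow> real"
  assumes ab: "a \<le> b" and cont: "continuous_on {a..b} g"
    and deriv: "\<And>v. v \<in> {a..<b} \<Longrightarrow> \<exists>d\<le>0. (g has_real_derivative d) (at v within {v..})"
  shows "g b \<le> g a"
proof (rule field_le_epsilon)
  fix \<epsilon> :: real assume \<epsilon>: "0 < \<epsilon>"
  define c where "c = \<epsilon> / (b - a + 1)"
  have c: "0 < c" "c * (b - a) \<le> \<epsilon>" using \<epsilon> ab by (auto simp: c_def field_simps)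
  define h where "h v = g v - c * (v - a)" for v
  have "h b \<le> h a"
  proof (rule real_continuous_induct[OF ab, where P="\<lambda>u. h u \<le> h a"])
    fix s assume s: "a < s" "s \<le> b" and below: "\<forall>u\<in>{a..<s}. h u \<le> h a"
    have "(h \<longlongrightarrow> h s) (at s within {a..s})"
      using continuous_on_subset[OF cont, of "{a..s}"] s
      unfolding h_def by (auto intro!: tendsto_intros simp: continuous_on_def)
    then have "(h \<longlongrightarrow> h s) (at_left s)" using s by (simp add: at_within_Icc_at_left)
    moreover have "eventually (\<lambda>u. h u \<le> h a) (at_left s)"
      using eventually_at_left_real[OF s(1)] by eventually_elim (use below in auto)
    ultimately show "h s \<le> h a"
      by (intro tendsto_upperbound[of h "h s"]) (auto simp: trivial_limit_at_left_real)
  next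
    fix s assume s: "a \<le> s" "s < b" and upto: "\<forall>u\<in>{a..s}. h u \<le> h a"
    obtain d where d: "d \<le> 0" "(g has_real_derivative d) (at s within {s..})"
      using deriv[of s] s by auto
    have "(h has_real_derivative d - c) (at s within {s..})"
      unfolding h_def by (auto intro!: derivative_eq_intros d(2))
    then obtain \<delta> where \<delta>: "\<delta> > 0" "\<And>k. k > 0 \<Longrightarrow> s + k \<in> {s..} \<Longrightarrow> k < \<delta> \<Longrightarrow> h (s + k) < h s"
      using has_real_derivative_neg_dec_right[of h "d - c" s "{s..}"] d(1) c(1) by force
    have "h s \<le> h a" using upto s by auto
    then have "h u \<le> h a" if "u \<in> {s<..s + \<delta> / 2}" for u
      using \<delta>(2)[of "u - s"] \<delta>(1) that by auto
    with \<delta>(1) show "\<exists>e>0. \<forall>u\<in>{s<..s + e}. h u \<le> h a"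
      by (intro exI[of _ "\<delta> / 2"]) auto
  qed simp
  then show "g b \<le> g a + \<epsilon>" using c by (simp add: h_def)
qed

lemma derivative_bound_if_decay_along_solutions:
  fixes V :: "'a::real_normed_vector \<Rightarrow> real" and g :: "'a \<Rightarrow> 'a"
  assumes V: "(V has_derivative D) (at \<xi>)"
    and ex: "\<exists>\<gamma>. ode_solution g \<gamma> \<and> \<gamma> 0 = \<xi>"
    and decay: "\<forall>\<gamma>. ode_solution g \<gamma> \<longrightarrow> (\<forall>t\<ge>0. V (\<gamma> t) \<le> V (\<gamma> 0) * exp (- lam * t))"
  shows "D (g \<xi>) \<le> - lam * V \<xi>"
proof (rule ccontr)
  assume "\<not> D (g \<xi>) \<le> - lam * V \<xi>"
  then have pos: "D (g \<xi>) + lam * V \<xi> > 0" by simp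
  obtain \<gamma> where \<gamma>: "ode_solution g \<gamma>" "\<gamma> 0 = \<xi>" using ex by blast
  have "(\<gamma> has_vector_derivative g \<xi>) (at 0 within {0..})"
    using \<gamma> unfolding ode_solution_def by auto
  from vector_derivative_diff_chain_within[OF this has_derivative_at_withinI] V \<gamma>(2)
  have "((V \<circ> \<gamma>) has_vector_derivative D (g \<xi>)) (at 0 within {0..})"
    by simp
  then have "((\<lambda>t. V (\<gamma> t)) has_real_derivative D (g \<xi>)) (at 0 within {0..})"
    by (simp add: has_real_derivative_iff_has_vector_derivative o_def)
  then have "((\<lambda>t. V (\<gamma> t) - V \<xi> * exp (- lam * t)) has_real_derivative D (g \<xi>) + lam * V \<xi>)
      (at 0 within {0..})"
    by (auto intro!: derivative_eq_intros)
  from has_real_derivative_pos_inc_right[OF this pos] obtain \<delta> where \<delta>: "\<delta> > 0"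
    "\<And>k. k > 0 \<Longrightarrow> k < \<delta> \<Longrightarrow> V (\<gamma> 0) - V \<xi> < V (\<gamma> k) - V \<xi> * exp (- lam * k)"
    by force
  have "V (\<gamma> (\<delta> / 2)) > V (\<gamma> 0) * exp (- lam * (\<delta> / 2))"
    using \<delta>(2)[of "\<delta> / 2"] \<delta>(1) \<gamma>(2) by simp
  moreover have "V (\<gamma> (\<delta> / 2)) \<le> V (\<gamma> 0) * exp (- lam * (\<delta> / 2))"
    using decay \<gamma>(1) \<delta>(1) by (metis half_gt_zero less_eq_real_def)
  ultimately show False by simp
qed

lemma exponential_decay_along_right_solution:
  fixes x :: "real \<Rightarrow> 'a::real_normed_vector"
  assumes su: "s \<le> u" and cont: "continuous_on {s..u} x"
    and x: "\<And>v. v \<in> {s..<u} \<Longrightarrow> (x has_vector_derivative g (x v)) (at v within {v..})"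
    and W: "\<And>\<xi>. (W has_derivative DW \<xi>) (at \<xi>)"
    and decay: "\<And>\<xi>. DW \<xi> (g \<xi>) \<le> - lam * W \<xi>"
  shows "W (x u) \<le> W (x s) * exp (- lam * (u - s))"
proof -
  have "continuous_on UNIV W"
    using W by (intro continuous_at_imp_continuous_on) (auto intro: has_derivative_continuous)
  then have "continuous_on {s..u} (\<lambda>v. W (x v) * exp (lam * (v - s)))"
    by (intro continuous_intros continuous_on_compose2[OF _ cont]) auto
  then have "W (x u) * exp (lam * (u - s)) \<le> W (x s) * exp (lam * (s - s))"
  proof (rule nonincreasing_if_right_derivative_nonpos[OF su])
    fix v assume v: "v \<in> {s..<u}"
    from vector_derivative_diff_chain_within[OF x[OF v] has_derivative_at_withinI[OF W]]
    have "((\<lambda>v. W (x v)) has_real_derivative DW (x v) (g (x v))) (at v within {v..})"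
      by (simp add: has_real_derivative_iff_has_vector_derivative o_def)
    then have "((\<lambda>v. W (x v) * exp (lam * (v - s))) has_real_derivative
        exp (lam * (v - s)) * (DW (x v) (g (x v)) + lam * W (x v))) (at v within {v..})"
      by (auto intro!: derivative_eq_intros simp: algebra_simps)
    moreover have "exp (lam * (v - s)) * (DW (x v) (g (x v)) + lam * W (x v)) \<le> 0"
      using decay[of "x v"] by (intro mult_nonneg_nonpos) auto
    ultimately show "\<exists>d\<le>0. ((\<lambda>v. W (x v) * exp (lam * (v - s))) has_real_derivative d) (at v within {v..})"
      by blast
  qed
  then have "W (x u) * exp (lam * (u - s)) * exp (- lam * (u - s)) \<le> W (x s) * exp (- lam * (u - s))"
    by (intro mult_right_mono) auto
  then show ?thesis
    by (simp add: mult.assoc flip: exp_add)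
qed

section \<open>Comparison functions\<close>

lemma class_K_nonneg: "class_K \<alpha> \<Longrightarrow> 0 \<le> r \<Longrightarrow> 0 \<le> \<alpha> r"
  unfolding class_K_def by (metis atLeast_iff order_refl strict_mono_on_leD)

lemma class_K_image_atLeastAtMost:
  assumes "class_K \<alpha>" "0 \<le> R"
  shows "\<alpha> ` {0..R} = {0..\<alpha> R}"
proof
  have cont: "continuous_on {0..} \<alpha>" and zero: "\<alpha> 0 = 0" and mono: "strict_mono_on {0..} \<alpha>"
    using assms(1) by (auto simp: class_K_def)
  show "\<alpha> ` {0..R} \<subseteq> {0..\<alpha> R}"
  proof clarsimp
    fix r :: real assume "0 \<le> r" "r \<le> R"
    then show "0 \<le> \<alpha> r \<and> \<alpha> r \<le> \<alpha> R"
      using strict_mono_on_leD[OF mono, of 0 r] strict_mono_on_leD[OF mono, of r R] zero by simp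
  qed
  show "{0..\<alpha> R} \<subseteq> \<alpha> ` {0..R}"
  proof
    fix y assume "y \<in> {0..\<alpha> R}"
    then obtain r where "0 \<le> r" "r \<le> R" "\<alpha> r = y"
      using IVT'[of \<alpha> 0 y R] zero assms(2) continuous_on_subset[OF cont, of "{0..R}"] by auto
    then show "y \<in> \<alpha> ` {0..R}" by force
  qed
qed

lemma class_Kinf_exceeds:
  assumes "class_Kinf \<alpha>"
  obtains R where "0 \<le> R" "y < \<alpha> R"
proof -
  obtain R where "\<forall>r\<ge>R. \<alpha> r > y"
    using assms by (auto simp: class_Kinf_def filterlim_at_top_dense eventually_at_top_linorder)
  then show ?thesis using that[of "max R 0"] by simp
qed

lemma class_Kinf_inverse:
  assumes "class_Kinf \<alpha>"
  obtains \<alpha>' where "class_K \<alpha>'" "\<And>y. 0 \<le> y \<Longrightarrow> 0 \<le> \<alpha>' y \<and> \<alpha> (\<alpha>' y) = y"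
    "\<And>r. 0 \<le> r \<Longrightarrow> \<alpha>' (\<alpha> r) = r"
proof -
  have K: "class_K \<alpha>" using assms by (simp add: class_Kinf_def)
  then have cont: "continuous_on {0..} \<alpha>" and zero: "\<alpha> 0 = 0" and mono: "strict_mono_on {0..} \<alpha>"
    by (auto simp: class_K_def)
  have inj: "inj_on \<alpha> {0..}" using mono by (rule strict_mono_on_imp_inj_on)
  define \<alpha>' where "\<alpha>' = the_inv_into {0..} \<alpha>"
  have inv: "0 \<le> \<alpha>' y \<and> \<alpha> (\<alpha>' y) = y" if "0 \<le> y" for y
  proof -
    obtain R where "0 \<le> R" "y < \<alpha> R" using class_Kinf_exceeds[OF assms] by blast
    then have "y \<in> \<alpha> ` {0..R}" using class_K_image_atLeastAtMost[OF K, of R] that by auto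
    then have "y \<in> \<alpha> ` {0..}" by auto
    then show ?thesis using f_the_inv_into_f[OF inj] the_inv_into_into[OF inj] by (auto simp: \<alpha>'_def)
  qed
  have inv': "\<alpha>' (\<alpha> r) = r" if "0 \<le> r" for r
    using that the_inv_into_f_f[OF inj] by (simp add: \<alpha>'_def)
  have "continuous (at y within {0..}) \<alpha>'" if y: "0 \<le> y" for y
  proof -
    obtain R where R: "0 \<le> R" "y < \<alpha> R" using class_Kinf_exceeds[OF assms] by blast
    have "continuous_on (\<alpha> ` {0..R}) \<alpha>'"
      by (rule continuous_on_inv) (use inv' continuous_on_subset[OF cont] in auto)
    then have "continuous (at y within {0..\<alpha> R}) \<alpha>'"
      using class_K_image_atLeastAtMost[OF K R(1)] y R by (simp add: continuous_on_eq_continuous_within)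
    moreover have "at y within {0..\<alpha> R} = at y within {0..}"
      by (rule at_within_nhd[where S="{..<\<alpha> R}"]) (use y R in auto)
    ultimately show ?thesis by simp
  qed
  then have "continuous_on {0..} \<alpha>'" by (simp add: continuous_on_eq_continuous_within)
  moreover have "strict_mono_on {0..} \<alpha>'"
  proof (rule strict_mono_onI)
    fix y z :: real assume "y \<in> {0..}" "z \<in> {0..}" "y < z"
    then show "\<alpha>' y < \<alpha>' z"
      using inv[of y] inv[of z] strict_mono_on_leD[OF mono, of "\<alpha>' z" "\<alpha>' y"] by force
  qed
  moreover have "\<alpha>' 0 = 0" using inv'[of 0] zero by simp
  ultimately show ?thesis using inv inv' by (intro that) (auto simp: class_K_def)
qed

lemma class_KL_exponential:
  assumes a: "class_K a" and b: "class_K b" and c: "0 < c"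
  shows "class_KL (\<lambda>r t. a (b r * exp (K - c * t)))"
proof -
  have a_cont: "continuous_on {0..} a" and a0: "a 0 = 0" and a_mono: "strict_mono_on {0..} a"
    and b_cont: "continuous_on {0..} b" and b0: "b 0 = 0" and b_mono: "strict_mono_on {0..} b"
    using a b by (auto simp: class_K_def)
  have b_nonneg: "0 \<le> b r * exp z" if "0 \<le> r" for r z
    using class_K_nonneg[OF b that] by simp
  have "class_K (\<lambda>r. a (b r * exp (K - c * t)))" for t
    unfolding class_K_def
  proof (intro conjI)
    have "continuous_on {0..} (\<lambda>r. b r * exp (K - c * t))"
      by (intro continuous_intros b_cont)
    then show "continuous_on {0..} (\<lambda>r. a (b r * exp (K - c * t)))"
      by (rule continuous_on_compose2[OF a_cont]) (use b_nonneg in auto)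
    show "strict_mono_on {0..} (\<lambda>r. a (b r * exp (K - c * t)))"
    proof (rule strict_mono_onI)
      fix r s :: real assume rs: "r \<in> {0..}" "s \<in> {0..}" "r < s"
      then have "b r * exp (K - c * t) < b s * exp (K - c * t)"
        using strict_mono_onD[OF b_mono rs] by simp
      then show "a (b r * exp (K - c * t)) < a (b s * exp (K - c * t))"
        using rs b_nonneg by (intro strict_mono_onD[OF a_mono]) auto
    qed
  qed (simp add: a0 b0)
  moreover have "a (b r * exp (K - c * u)) \<le> a (b r * exp (K - c * s))"
    if "0 \<le> r" "0 \<le> s" "s \<le> u" for r s u
  proof -
    have "b r * exp (K - c * u) \<le> b r * exp (K - c * s)"
      using that c class_K_nonneg[OF b that(1)] by (intro mult_left_mono) auto
    then show ?thesis
      using b_nonneg[OF that(1)] by (intro strict_mono_on_leD[OF a_mono]) auto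
  qed
  moreover have "((\<lambda>t. a (b r * exp (K - c * t))) \<longlongrightarrow> 0) at_top" if "0 \<le> r" for r
  proof -
    have "((\<lambda>t. b r * exp (K - c * t)) \<longlongrightarrow> 0) at_top" using c by real_asymp
    from continuous_on_tendsto_compose[OF a_cont this] show ?thesis
      using b_nonneg[OF that] by (simp add: a0)
  qed
  ultimately show ?thesis by (auto simp: class_KL_def)
qed

lemma GAS_if_exponential_bound:
  assumes "class_Kinf \<alpha>l" "class_Kinf \<alpha>u" "0 < c"
    and bound: "\<And>x0 x t. switched_solution f \<sigma> x0 x \<Longrightarrow> 0 \<le> t \<Longrightarrow>
      \<alpha>l (norm (x t)) \<le> \<alpha>u (norm x0) * exp (K - c * t)"
  shows "GAS f \<sigma>"
proof -
  obtain \<alpha>' where \<alpha>': "class_K \<alpha>'" "\<And>y. 0 \<le> y \<Longrightarrow> 0 \<le> \<alpha>' y \<and> \<alpha>l (\<alpha>' y) = y"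
    "\<And>r. 0 \<le> r \<Longrightarrow> \<alpha>' (\<alpha>l r) = r"
    using class_Kinf_inverse[OF assms(1)] by blast
  have Ku: "class_K \<alpha>u" using assms(2) by (simp add: class_Kinf_def)
  have "norm (x t) \<le> \<alpha>' (\<alpha>u (norm x0) * exp (K - c * t))"
    if "switched_solution f \<sigma> x0 x" "0 \<le> t" for x0 x t
  proof -
    have "\<alpha>' (\<alpha>l (norm (x t))) \<le> \<alpha>' (\<alpha>u (norm x0) * exp (K - c * t))"
      using bound[OF that] \<alpha>'(1) class_K_nonneg[OF Ku] class_K_nonneg[of \<alpha>l] assms(1)
      by (intro strict_mono_on_leD[of "{0..}" \<alpha>']) (auto simp: class_K_def class_Kinf_def)
    then show ?thesis using \<alpha>'(3) by simp
  qed
  then show ?thesis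
    unfolding GAS_def using class_KL_exponential[OF \<alpha>'(1) Ku assms(3)] by blast
qed

section \<open>Switching signals\<close>

lemma left_val_eqI:
  assumes "e > 0" "\<forall>v\<in>{u - e<..<u}. \<sigma> v = c"
  shows "left_val \<sigma> u = c"
  unfolding left_val_def
proof (rule the_equality)
  fix c' assume "\<exists>e>0. \<forall>v\<in>{u - e<..<u}. \<sigma> v = c'"
  then obtain e' where e': "e' > 0" "\<forall>v\<in>{u - e'<..<u}. \<sigma> v = c'" by blast
  have "u - min e e' / 2 \<in> {u - e<..<u} \<inter> {u - e'<..<u}" using assms(1) e'(1) by auto
  then show "c' = c" using assms(2) e'(2) by (metis IntD1 IntD2)
qed (use assms in blast)

lemma not_switch_if_constant:
  assumes "\<forall>r\<in>{u<..<v}. \<sigma> r = c" "w \<in> {u<..<v}"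
  shows "\<not> is_switch \<sigma> w"
  using assms left_val_eqI[of "w - u" w \<sigma> c] by (auto simp: is_switch_def)

lemma admissible_signalD:
  assumes "admissible_signal P E \<sigma>"
  shows admissible_signal_in: "t \<ge> 0 \<Longrightarrow> \<sigma> t \<in> P"
    and admissible_signal_right_const: "t \<ge> 0 \<Longrightarrow> \<exists>e>0. \<forall>u\<in>{t..<t + e}. \<sigma> u = \<sigma> t"
    and admissible_signal_left_const: "t > 0 \<Longrightarrow> \<exists>e>0. \<exists>c. \<forall>u\<in>{t - e<..<t}. \<sigma> u = c"
    and admissible_signal_switch: "is_switch \<sigma> t \<Longrightarrow> (left_val \<sigma> t, \<sigma> t) \<in> E"
  using assms by (auto simp: admissible_signal_def)

lemma admissible_signal_switches_isolated:
  assumes adm: "admissible_signal P E \<sigma>" and t: "t \<ge> 0"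
  shows "\<exists>e>0. \<forall>s. is_switch \<sigma> s \<and> dist s t < e \<longrightarrow> s = t"
proof -
  obtain e1 where e1: "e1 > 0" "\<forall>u\<in>{t..<t + e1}. \<sigma> u = \<sigma> t"
    using admissible_signal_right_const[OF adm t] by blast
  have "{t<..<t + e1} \<subseteq> {t..<t + e1}" by auto
  then have "\<forall>r\<in>{t<..<t + e1}. \<sigma> r = \<sigma> t" using e1(2) by blast
  then have right: "\<not> is_switch \<sigma> s" if "s \<in> {t<..<t + e1}" for s
    using not_switch_if_constant that by blast
  obtain e2 where e2: "e2 > 0" "\<And>s. s \<in> {t - e2<..<t} \<Longrightarrow> \<not> is_switch \<sigma> s"
  proof (cases "t = 0")
    case True
    show ?thesis by (rule that[of 1]) (use True in \<open>auto simp: is_switch_def\<close>)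
  next
    case False
    then obtain e2 c where "e2 > 0" "\<forall>u\<in>{t - e2<..<t}. \<sigma> u = c"
      using admissible_signal_left_const[OF adm, of t] t by auto
    then show ?thesis using that[of e2] not_switch_if_constant[of "t - e2" t \<sigma> c] by blast
  qed
  have "s = t" if "is_switch \<sigma> s" "dist s t < min e1 e2" for s
  proof (rule ccontr)
    assume "s \<noteq> t"
    then have "s \<in> {t<..<t + e1} \<or> s \<in> {t - e2<..<t}"
      using that(2) by (auto simp: dist_real_def)
    then show False using right e2(2) that(1) by blast
  qed
  moreover have "min e1 e2 > 0" using e1(1) e2(1) by simp
  ultimately show ?thesis by blast
qed

lemma admissible_signal_finite_switches:
  assumes adm: "admissible_signal P E \<sigma>"
  shows "finite {s\<in>{0<..t}. is_switch \<sigma> s}"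
proof -
  define e where "e p = (SOME e. e > 0 \<and> (\<forall>s. is_switch \<sigma> s \<and> dist s p < e \<longrightarrow> s = p))" for p
  have e: "e p > 0 \<and> (\<forall>s. is_switch \<sigma> s \<and> dist s p < e p \<longrightarrow> s = p)" if "p \<ge> 0" for p
    unfolding e_def by (rule someI_ex, rule admissible_signal_switches_isolated[OF adm that])
  obtain C where C: "C \<subseteq> {0..t}" "finite C" "{0..t} \<subseteq> (\<Union>c\<in>C. ball c (e c))"
  proof (rule compactE_image[of "{0..t}" "{0..t}" "\<lambda>p. ball p (e p)"])
    show "{0..t} \<subseteq> (\<Union>c\<in>{0..t}. ball c (e c))" using e by force
  qed auto
  have "{s\<in>{0<..t}. is_switch \<sigma> s} \<subseteq> C"
  proof
    fix s assume s: "s \<in> {s\<in>{0<..t}. is_switch \<sigma> s}"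
    then have "s \<in> {0..t}" by auto
    then obtain c where "c \<in> C" "s \<in> ball c (e c)" using C(3) by blast
    moreover from this have "s = c" using e[of c] C(1) s by (auto simp: dist_commute)
    ultimately show "s \<in> C" by simp
  qed
  then show ?thesis using C(2) by (rule finite_subset)
qed

lemma num_switches_from_to_mono:
  assumes "admissible_signal P E \<sigma>" "t \<le> T"
  shows "num_switches_from_to \<sigma> k l t \<le> num_switches_from_to \<sigma> k l T"
  unfolding num_switches_from_to_def using assms
  by (intro card_mono finite_subset[OF _ admissible_signal_finite_switches[OF assms(1), of T]]) auto

lemma num_switches_from_to_le:
  assumes "admissible_signal P E \<sigma>"
  shows "num_switches_from_to \<sigma> k l t \<le> num_switches \<sigma> t"
  unfolding num_switches_from_to_def num_switches_def
  by (rule card_mono[OF admissible_signal_finite_switches[OF assms]]) blast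

lemma num_switches_from_to_step:
  assumes adm: "admissible_signal P E \<sigma>" and uv: "u < v" and no_switch: "\<forall>r\<in>{u<..<v}. \<not> is_switch \<sigma> r"
  shows "num_switches_from_to \<sigma> k l v = num_switches_from_to \<sigma> k l u
    + (if is_switch \<sigma> v \<and> left_val \<sigma> v = k \<and> \<sigma> v = l then 1 else 0)"
proof -
  define S where "S t = {s\<in>{0<..t}. is_switch \<sigma> s \<and> left_val \<sigma> s = k \<and> \<sigma> s = l}" for t
  have fin: "finite (S u)"
    unfolding S_def by (rule finite_subset[OF _ admissible_signal_finite_switches[OF adm, of u]]) auto
  have v: "v \<notin> S u" using uv by (simp add: S_def)
  have "s \<le> u \<or> s = v" if "s \<in> {0<..v}" "is_switch \<sigma> s" for s
    using that no_switch by (cases "s \<le> u") auto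
  then have "S v = (if is_switch \<sigma> v \<and> left_val \<sigma> v = k \<and> \<sigma> v = l then insert v (S u) else S u)"
    using uv by (auto simp: S_def is_switch_def)
  then have "card (S v) = card (S u) + (if is_switch \<sigma> v \<and> left_val \<sigma> v = k \<and> \<sigma> v = l then 1 else 0)"
    using fin v by simp
  then show ?thesis by (simp add: num_switches_from_to_def S_def)
qed

lemma admissible_signal_locally_constant:
  assumes adm: "admissible_signal P E \<sigma>" and r: "r > 0" "\<not> is_switch \<sigma> r"
  obtains e where "e > 0" "\<And>u. u \<in> ball r e \<Longrightarrow> \<sigma> u = \<sigma> r"
proof -
  have "0 \<le> r" using r(1) by simp
  then obtain e1 where e1: "e1 > 0" "\<forall>u\<in>{r..<r + e1}. \<sigma> u = \<sigma> r"
    using admissible_signal_right_const[OF adm] by blast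
  obtain e2 c where e2: "e2 > 0" "\<forall>u\<in>{r - e2<..<r}. \<sigma> u = c"
    using admissible_signal_left_const[OF adm r(1)] by blast
  have "c = \<sigma> r" using left_val_eqI[OF e2] r by (simp add: is_switch_def)
  have const: "\<sigma> u = \<sigma> r" if "u \<in> ball r (min e1 e2)" for u
  proof (cases "u < r")
    case True
    then have "u \<in> {r - e2<..<r}" using that by (auto simp: dist_real_def)
    then show ?thesis using e2(2) \<open>c = \<sigma> r\<close> by blast
  next
    case False
    then have "u \<in> {r..<r + e1}" using that by (auto simp: dist_real_def)
    then show ?thesis using e1(2) by blast
  qed
  show ?thesis
  proof (rule that)
    show "min e1 e2 > 0" using e1(1) e2(1) by simp
  qed (rule const)
qed

lemma activation_set_sets:
  assumes adm: "admissible_signal P E \<sigma>"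
  shows "{r\<in>{0<..t}. \<sigma> r = j} \<in> sets lborel"
proof -
  define S where "S = {r\<in>{0<..t}. \<sigma> r = j}"
  define F where "F = insert t {s\<in>{0<..t}. is_switch \<sigma> s}"
  have "r \<in> interior S" if r: "r \<in> S - F" for r
  proof -
    have r': "0 < r" "r < t" "\<not> is_switch \<sigma> r" "\<sigma> r = j"
      using r by (auto simp: S_def F_def)
    obtain e where e: "e > 0" "\<And>u. u \<in> ball r e \<Longrightarrow> \<sigma> u = \<sigma> r"
      using admissible_signal_locally_constant[OF adm r'(1,3)] by blast
    have "ball r (min e (min r (t - r))) \<subseteq> S"
    proof
      fix u assume u: "u \<in> ball r (min e (min r (t - r)))"
      then have "\<sigma> u = j" using e(2)[of u] r'(4) by simp
      moreover have "u \<in> {0<..t}" using u by (auto simp: dist_real_def)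
      ultimately show "u \<in> S" by (simp add: S_def)
    qed
    then show ?thesis using e(1) r' by (intro interiorI[OF open_ball]) auto
  qed
  then have "S = interior S \<union> (S \<inter> F)" using interior_subset by blast
  moreover have "finite F" using admissible_signal_finite_switches[OF adm] by (simp add: F_def)
  ultimately have "S \<in> sets borel"
    by (metis borel_open open_interior sets.Un borel_closed finite_imp_closed finite_Int)
  then show ?thesis by (simp add: S_def)
qed

lemma bounded_Ioc_fmeasurable: "{a<..b::real} \<in> fmeasurable lborel"
  by (rule fmeasurableI2[OF fmeasurable_cbox[of a b]]) auto

lemma activation_set_fmeasurable:
  assumes "admissible_signal P E \<sigma>"
  shows "{r\<in>{0<..t}. \<sigma> r = j} \<in> fmeasurable lborel"
  by (rule fmeasurableI2[OF bounded_Ioc_fmeasurable[of 0 t] _ activation_set_sets[OF assms]]) auto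

lemma activation_time_le:
  assumes "admissible_signal P E \<sigma>" "0 \<le> t"
  shows "activation_time \<sigma> j t \<le> t"
proof -
  have "activation_time \<sigma> j t \<le> measure lborel {0<..t}"
    unfolding activation_time_def
    by (intro measure_mono_fmeasurable activation_set_sets[OF assms(1)] bounded_Ioc_fmeasurable) auto
  then show ?thesis using assms(2) by simp
qed

lemma activation_time_step:
  assumes adm: "admissible_signal P E \<sigma>" and uv: "0 \<le> u" "u \<le> v"
    and const: "\<forall>r\<in>{u<..<v}. \<sigma> r = c"
  shows "activation_time \<sigma> j v = activation_time \<sigma> j u + (if c = j then v - u else 0)"
proof -
  define A where "A t = {r\<in>{0<..t}. \<sigma> r = j}" for t
  define D where "D = A v - A u"
  have A: "A t \<in> fmeasurable lborel" for t
    unfolding A_def by (rule activation_set_fmeasurable[OF adm])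
  have D: "D \<in> fmeasurable lborel" unfolding D_def by (intro fmeasurable_Diff A fmeasurableD)
  have D_eq: "D = {r\<in>{u<..v}. \<sigma> r = j}" using uv by (auto simp: D_def A_def)
  have "A v = A u \<union> D" "D - A u = D" using uv by (auto simp: D_def A_def)
  then have "activation_time \<sigma> j v = activation_time \<sigma> j u + measure lborel D"
    using measure_Un2[OF A D] by (simp add: activation_time_def A_def)
  moreover have "measure lborel D = (if c = j then v - u else 0)"
  proof (cases "c = j")
    case True
    have "measure lborel {u<..<v} \<le> measure lborel D"
      using const True by (intro measure_mono_fmeasurable[OF _ _ D]) (auto simp: D_eq)
    moreover have "measure lborel D \<le> measure lborel {u<..v}"
      using D by (intro measure_mono_fmeasurable bounded_Ioc_fmeasurable) (auto simp: D_eq)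
    ultimately show ?thesis using True uv by simp
  next
    case False
    then have "D \<subseteq> {v}" using const by (auto simp: D_eq)
    then have "measure lborel D \<le> measure lborel {v}"
      using D by (intro measure_mono_fmeasurable) (auto intro: fmeasurableI)
    then show ?thesis using False by (simp add: measure_nonneg antisym)
  qed
  ultimately show ?thesis by simp
qed

text \<open>The logarithm of the factor by which the Lyapunov value may grow on \<open>]0, t]\<close>: a switch
  \<open>k \<rightarrow> l\<close> costs \<open>ln \<mu>\<^sub>k\<^sub>l\<close> and time spent in mode \<open>j\<close> earns \<open>\<lambda>\<^sub>j\<close>. Divided by \<open>t\<close>
  it is the expression under the limsup of the theorem (\<open>switching_exponent_rate\<close>).\<close>

definition switching_exponent ::
  "(nat \<times> nat) set \<Rightarrow> (nat \<Rightarrow> nat \<Rightarrow> real) \<Rightarrow> nat set \<Rightarrow> (nat \<Rightarrow> real) \<Rightarrow> (real \<Rightarrow> nat) \<Rightarrow> real \<Rightarrow> real"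
  where "switching_exponent E \<mu> P lam \<sigma> t =
    (\<Sum>(k, l)\<in>E. ln (\<mu> k l) * real (num_switches_from_to \<sigma> k l t))
    - (\<Sum>j\<in>P. lam j * activation_time \<sigma> j t)"

lemma switching_exponent_0 [simp]: "switching_exponent E \<mu> P lam \<sigma> 0 = 0"
  by (simp add: switching_exponent_def num_switches_from_to_def activation_time_def)

lemma sum_ln_num_switches_step:
  assumes adm: "admissible_signal P E \<sigma>" and "finite E"
    and uv: "u < v" and no_switch: "\<forall>r\<in>{u<..<v}. \<not> is_switch \<sigma> r"
  shows "(\<Sum>(k, l)\<in>E. ln (\<mu> k l) * real (num_switches_from_to \<sigma> k l v))
    = (\<Sum>(k, l)\<in>E. ln (\<mu> k l) * real (num_switches_from_to \<sigma> k l u))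
      + (if is_switch \<sigma> v then ln (\<mu> (left_val \<sigma> v) (\<sigma> v)) else 0)"
proof -
  define p where "p = (left_val \<sigma> v, \<sigma> v)"
  have "(\<Sum>(k, l)\<in>E. ln (\<mu> k l) * real (num_switches_from_to \<sigma> k l v))
      = (\<Sum>q\<in>E. (case q of (k, l) \<Rightarrow> ln (\<mu> k l) * real (num_switches_from_to \<sigma> k l u))
          + (if is_switch \<sigma> v \<and> q = p then ln (\<mu> (fst q) (snd q)) else 0))"
    by (rule sum.cong) (auto simp: num_switches_from_to_step[OF adm uv no_switch] p_def algebra_simps
        split: if_splits)
  also have "\<dots> = (\<Sum>(k, l)\<in>E. ln (\<mu> k l) * real (num_switches_from_to \<sigma> k l u))
      + (\<Sum>q\<in>E. if is_switch \<sigma> v \<and> q = p then ln (\<mu> (fst q) (snd q)) else 0)"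
    by (rule sum.distrib)
  also have "(\<Sum>q\<in>E. if is_switch \<sigma> v \<and> q = p then ln (\<mu> (fst q) (snd q)) else 0)
      = (if is_switch \<sigma> v then ln (\<mu> (left_val \<sigma> v) (\<sigma> v)) else 0)"
    using admissible_signal_switch[OF adm] \<open>finite E\<close> by (simp add: sum.delta' p_def)
  finally show ?thesis .
qed

lemma sum_activation_time_step:
  assumes adm: "admissible_signal P E \<sigma>" and "finite P" "c \<in> P"
    and uv: "0 \<le> u" "u \<le> v" and const: "\<forall>r\<in>{u<..<v}. \<sigma> r = c"
  shows "(\<Sum>j\<in>P. lam j * activation_time \<sigma> j v)
    = (\<Sum>j\<in>P. lam j * activation_time \<sigma> j u) + lam c * (v - u)"
proof -
  have "(\<Sum>j\<in>P. lam j * activation_time \<sigma> j v)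
      = (\<Sum>j\<in>P. lam j * activation_time \<sigma> j u + (if j = c then lam c * (v - u) else 0))"
    by (rule sum.cong) (auto simp: activation_time_step[OF adm uv const] algebra_simps)
  then show ?thesis using assms(2,3) by (simp add: sum.distrib)
qed

lemma switching_exponent_step:
  assumes adm: "admissible_signal P E \<sigma>" and fin: "finite P" "finite E"
    and uv: "0 \<le> u" "u < v" and c: "c \<in> P" and const: "\<forall>r\<in>{u<..<v}. \<sigma> r = c"
  shows "switching_exponent E \<mu> P lam \<sigma> v = switching_exponent E \<mu> P lam \<sigma> u - lam c * (v - u)
    + (if is_switch \<sigma> v then ln (\<mu> (left_val \<sigma> v) (\<sigma> v)) else 0)"
proof -
  have "\<forall>r\<in>{u<..<v}. \<not> is_switch \<sigma> r"
    using const not_switch_if_constant by blast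
  then show ?thesis
    unfolding switching_exponent_def
    using sum_ln_num_switches_step[OF adm fin(2) uv(2)]
      sum_activation_time_step[OF adm fin(1) c uv(1) less_imp_le[OF uv(2)] const]
    by simp
qed

lemma switching_exponent_le:
  assumes adm: "admissible_signal P E \<sigma>" and t: "0 \<le> t" "t \<le> T"
  shows "switching_exponent E \<mu> P lam \<sigma> t
    \<le> (\<Sum>(k, l)\<in>E. \<bar>ln (\<mu> k l)\<bar> * real (num_switches_from_to \<sigma> k l T)) + (\<Sum>j\<in>P. \<bar>lam j\<bar>) * T"
proof -
  have "(\<Sum>(k, l)\<in>E. ln (\<mu> k l) * real (num_switches_from_to \<sigma> k l t))
      \<le> (\<Sum>(k, l)\<in>E. \<bar>ln (\<mu> k l)\<bar> * real (num_switches_from_to \<sigma> k l T))"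
  proof (rule sum_mono, clarsimp)
    fix k l
    have "ln (\<mu> k l) * real (num_switches_from_to \<sigma> k l t)
        \<le> \<bar>ln (\<mu> k l)\<bar> * real (num_switches_from_to \<sigma> k l t)"
      by (intro mult_right_mono) auto
    also have "\<dots> \<le> \<bar>ln (\<mu> k l)\<bar> * real (num_switches_from_to \<sigma> k l T)"
      using num_switches_from_to_mono[OF adm t(2)] by (intro mult_left_mono) auto
    finally show "ln (\<mu> k l) * real (num_switches_from_to \<sigma> k l t)
        \<le> \<bar>ln (\<mu> k l)\<bar> * real (num_switches_from_to \<sigma> k l T)" .
  qed
  moreover have "- (\<Sum>j\<in>P. lam j * activation_time \<sigma> j t) \<le> (\<Sum>j\<in>P. \<bar>lam j\<bar>) * T"
  proof -
    have "- (lam j * activation_time \<sigma> j t) \<le> \<bar>lam j\<bar> * T" for j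
    proof -
      have "0 \<le> activation_time \<sigma> j t" "activation_time \<sigma> j t \<le> T"
        using activation_time_le[OF adm t(1), of j] t by (auto simp: activation_time_def)
      then have "\<bar>lam j * activation_time \<sigma> j t\<bar> \<le> \<bar>lam j\<bar> * T"
        by (simp add: abs_mult mult_left_mono)
      then show ?thesis by linarith
    qed
    then show ?thesis by (simp add: sum_distrib_right sum_negf[symmetric] sum_mono)
  qed
  ultimately show ?thesis by (simp add: switching_exponent_def)
qed

lemma switch_freq_mult_trans_freq:
  assumes "admissible_signal P E \<sigma>"
  shows "switch_freq \<sigma> t * trans_freq \<sigma> k l t = real (num_switches_from_to \<sigma> k l t) / t"
  using num_switches_from_to_le[OF assms, of k l t]
  by (cases "num_switches \<sigma> t = 0") (auto simp: switch_freq_def trans_freq_def)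

lemma sum_abs_partition:
  fixes w a :: "nat \<Rightarrow> real"
  assumes "PS \<union> PU = P" "PS \<inter> PU = {}" "finite P"
    and "\<forall>j\<in>PS. w j > 0" "\<forall>j\<in>PU. w j < 0"
  shows "(\<Sum>j\<in>PS. \<bar>w j\<bar> * a j) - (\<Sum>j\<in>PU. \<bar>w j\<bar> * a j) = (\<Sum>j\<in>P. w j * a j)"
proof -
  have "(\<Sum>j\<in>PS. \<bar>w j\<bar> * a j) = (\<Sum>j\<in>PS. w j * a j)" "(\<Sum>j\<in>PU. \<bar>w j\<bar> * a j) = - (\<Sum>j\<in>PU. w j * a j)"
    using assms(4,5) by (auto simp: sum_negf[symmetric] intro!: sum.cong)
  moreover have "finite PS" "finite PU" using assms(1,3) by (auto intro: finite_subset)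
  ultimately show ?thesis
    using sum.union_disjoint[of PS PU "\<lambda>j. w j * a j"] assms(1,2) by simp
qed

lemma switching_exponent_rate:
  assumes adm: "admissible_signal P E \<sigma>" and t: "t > 0"
    and part: "PS \<union> PU = P" "PS \<inter> PU = {}" "finite P"
    and lam: "\<forall>j\<in>PS. lam j > 0" "\<forall>j\<in>PU. lam j < 0"
  shows "switch_freq \<sigma> t * (\<Sum>(k, l)\<in>E. ln (\<mu> k l) * trans_freq \<sigma> k l t)
      - (\<Sum>j\<in>PS. \<bar>lam j\<bar> * activation_frac \<sigma> j t) + (\<Sum>j\<in>PU. \<bar>lam j\<bar> * activation_frac \<sigma> j t)
    = switching_exponent E \<mu> P lam \<sigma> t / t"
proof -
  have "switch_freq \<sigma> t * (ln (\<mu> k l) * trans_freq \<sigma> k l t)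
      = ln (\<mu> k l) * real (num_switches_from_to \<sigma> k l t) / t" for k l
    using switch_freq_mult_trans_freq[OF adm, of t k l] by (metis mult.left_commute times_divide_eq_right)
  then have "switch_freq \<sigma> t * (\<Sum>(k, l)\<in>E. ln (\<mu> k l) * trans_freq \<sigma> k l t)
      = (\<Sum>(k, l)\<in>E. ln (\<mu> k l) * real (num_switches_from_to \<sigma> k l t)) / t"
    unfolding sum_distrib_left sum_divide_distrib by (intro sum.cong) auto
  moreover have "(\<Sum>j\<in>PS. \<bar>lam j\<bar> * activation_frac \<sigma> j t) - (\<Sum>j\<in>PU. \<bar>lam j\<bar> * activation_frac \<sigma> j t)
      = (\<Sum>j\<in>P. lam j * activation_time \<sigma> j t) / t"
    using sum_abs_partition[OF part lam, of "\<lambda>j. activation_frac \<sigma> j t"]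
    by (simp add: activation_frac_def sum_divide_distrib)
  ultimately show ?thesis by (simp add: switching_exponent_def diff_divide_distrib)
qed

lemma linear_decay_if_Limsup_negative:
  fixes B :: "real \<Rightarrow> real"
  assumes lim: "Limsup at_top (\<lambda>t. ereal (B t / t)) < 0"
    and bdd: "\<And>T. 0 \<le> T \<Longrightarrow> \<exists>M. \<forall>t\<in>{0..T}. B t \<le> M"
  obtains c K where "0 < c" "\<And>t. 0 \<le> t \<Longrightarrow> B t \<le> K - c * t"
proof -
  obtain r where r: "Limsup at_top (\<lambda>t. ereal (B t / t)) < ereal r" "r < 0"
    using ereal_dense2[OF lim] by auto
  have "eventually (\<lambda>t. ereal (B t / t) < ereal r) at_top" by (rule Limsup_lessD[OF r(1)])
  then obtain T where T: "\<And>t. t \<ge> T \<Longrightarrow> B t / t < r" by (auto simp: eventually_at_top_linorder)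
  define T' where "T' = max T 1"
  have "0 \<le> T'" by (simp add: T'_def)
  then obtain M where M: "\<forall>t\<in>{0..T'}. B t \<le> M" using bdd by blast
  have "B t \<le> (max M 0 - r * T') - (- r) * t" if t: "0 \<le> t" for t
  proof (cases "t \<le> T'")
    case True
    have "B t \<le> M" using M t True by simp
    moreover have "r * T' \<le> r * t" using mult_left_mono_neg[OF True, of r] r(2) by simp
    ultimately show ?thesis by simp
  next
    case False
    then have "t > 0" "B t / t < r" using T by (auto simp: T'_def)
    then have "B t < r * t" by (simp add: divide_less_eq)
    moreover have "0 \<le> - r * T'" using r(2) \<open>0 \<le> T'\<close> by simp
      (metis mult_nonpos_nonneg less_imp_le)
    ultimately show ?thesis by simp
  qed
  with r(2) show ?thesis by (intro that[of "- r"]) auto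
qed

section \<open>The Lyapunov estimate along switched solutions\<close>

locale switched_lyapunov =
  fixes P :: "nat set" and E :: "(nat \<times> nat) set" and \<sigma> :: "real \<Rightarrow> nat"
    and f :: "nat \<Rightarrow> 'a::real_normed_vector \<Rightarrow> 'a"
    and V :: "nat \<Rightarrow> 'a \<Rightarrow> real" and DV :: "nat \<Rightarrow> 'a \<Rightarrow> 'a \<Rightarrow> real"
    and lam :: "nat \<Rightarrow> real" and \<mu> :: "nat \<Rightarrow> nat \<Rightarrow> real"
  assumes admissible: "admissible_signal P E \<sigma>"
    and finite_modes: "finite P" and finite_transitions: "finite E"
    and V_derivative: "\<And>i \<xi>. i \<in> P \<Longrightarrow> (V i has_derivative DV i \<xi>) (at \<xi>)"
    and V_decay: "\<And>i \<xi>. i \<in> P \<Longrightarrow> DV i \<xi> (f i \<xi>) \<le> - lam i * V i \<xi>"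
    and V_jump: "\<And>i j \<xi>. (i, j) \<in> E \<Longrightarrow> V j \<xi> \<le> \<mu> i j * V i \<xi>"
    and \<mu>_pos: "\<And>i j. (i, j) \<in> E \<Longrightarrow> 0 < \<mu> i j"
begin

abbreviation exponent :: "real \<Rightarrow> real" where
  "exponent \<equiv> switching_exponent E \<mu> P lam \<sigma>"

lemma exponent_step:
  assumes "0 \<le> u" "u < v" "\<forall>r\<in>{u<..<v}. \<sigma> r = c"
  shows "exponent v = exponent u - lam c * (v - u)
    + (if is_switch \<sigma> v then ln (\<mu> (left_val \<sigma> v) (\<sigma> v)) else 0)"
proof -
  have "\<sigma> ((u + v) / 2) = c" "(u + v) / 2 \<ge> 0" using assms by auto
  then have "c \<in> P" using admissible_signal_in[OF admissible] by metis
  then show ?thesis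
    using switching_exponent_step[OF admissible finite_modes finite_transitions] assms by blast
qed

lemma lyapunov_right_step:
  assumes sol: "switched_solution f \<sigma> x0 x" and s: "0 \<le> s"
  shows "\<exists>e>0. \<forall>u\<in>{s<..s + e}. V (\<sigma> u) (x u) \<le> V (\<sigma> s) (x s) * exp (exponent u - exponent s)"
proof -
  define i where "i = \<sigma> s"
  obtain e where e: "e > 0" "\<forall>u\<in>{s..<s + e}. \<sigma> u = i"
    using admissible_signal_right_const[OF admissible s] unfolding i_def by blast
  have i: "i \<in> P" unfolding i_def by (rule admissible_signal_in[OF admissible s])
  have "V (\<sigma> u) (x u) \<le> V (\<sigma> s) (x s) * exp (exponent u - exponent s)" if u: "u \<in> {s<..s + e / 2}" for u
  proof -
    have const: "\<forall>r\<in>{s<..<s + e}. \<sigma> r = i" "\<forall>r\<in>{s<..<u}. \<sigma> r = i" using e(2) u by auto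
    have "V i (x u) \<le> V i (x s) * exp (- lam i * (u - s))"
    proof (rule exponential_decay_along_right_solution[OF _ _ _ V_derivative[OF i] V_decay[OF i]])
      show "continuous_on {s..u} x"
        using sol s by (auto simp: switched_solution_def elim: continuous_on_subset)
      fix v assume v: "v \<in> {s..<u}"
      then have "\<sigma> v = i" "0 \<le> v" using e(2) u s by auto
      moreover have "(x has_vector_derivative f (\<sigma> v) (x v)) (at v within {v..})"
        using sol \<open>0 \<le> v\<close> by (simp add: switched_solution_def)
      ultimately show "(x has_vector_derivative f i (x v)) (at v within {v..})" by simp
    qed (use u in auto)
    moreover have "\<not> is_switch \<sigma> u" using not_switch_if_constant[OF const(1)] u e(1) by auto
    then have "exponent u - exponent s = - lam i * (u - s)"
      using exponent_step[OF s _ const(2)] u by simp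
    moreover have "\<sigma> u = i" using e u by auto
    ultimately show ?thesis by (simp add: i_def)
  qed
  then show ?thesis using e(1) by (intro exI[of _ "e / 2"]) auto
qed

lemma lyapunov_left_step:
  assumes sol: "switched_solution f \<sigma> x0 x" and s: "0 < s"
    and below: "\<forall>u\<in>{0..<s}. V (\<sigma> u) (x u) \<le> C * exp (exponent u)"
  shows "V (\<sigma> s) (x s) \<le> C * exp (exponent s)"
proof -
  obtain e c where e: "e > 0" "\<forall>u\<in>{s - e<..<s}. \<sigma> u = c"
    using admissible_signal_left_const[OF admissible s] by blast
  define a where "a = max 0 (s - e)"
  have a: "0 \<le> a" "a < s" and const: "\<forall>r\<in>{a<..<s}. \<sigma> r = c"
    using s e by (auto simp: a_def)
  have c: "c \<in> P" "left_val \<sigma> s = c"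
    using const a admissible_signal_in[OF admissible, of "(a + s) / 2"] left_val_eqI[OF e] by auto
  define jump where "jump = (if is_switch \<sigma> s then ln (\<mu> c (\<sigma> s)) else 0)"
  \<comment> \<open>the jump term in the exponent pays for the factor \<open>\<mu>\<close> of (A2) at a switching instant\<close>
  have near: "V c (x u) \<le> C * exp (exponent s - jump + lam c * (s - u))" if u: "u \<in> {a<..<s}" for u
  proof -
    have "exponent s = exponent u - lam c * (s - u) + jump"
      using exponent_step[of u s c] const u a by (auto simp: jump_def c(2))
    moreover have "\<sigma> u = c" using const u by blast
    ultimately show ?thesis using below u a by auto
  qed
  have "isCont x s"
    using sol s by (auto simp: switched_solution_def continuous_on_interior[of "{0..}"])
  moreover have "isCont (V c) (x s)"
    using V_derivative[OF c(1)] by (rule has_derivative_continuous)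
  ultimately have "isCont (\<lambda>u. V c (x u)) s" by (rule isCont_o2)
  moreover have "isCont (\<lambda>u. C * exp (exponent s - jump + lam c * (s - u))) s"
    by (intro continuous_intros)
  ultimately have "V c (x s) \<le> C * exp (exponent s - jump + lam c * (s - s))"
    using near by (rule isCont_le_at_left[OF a(2)])
  then have Vc: "V c (x s) \<le> C * exp (exponent s - jump)" by simp
  show ?thesis
  proof (cases "is_switch \<sigma> s")
    case True
    have E: "(c, \<sigma> s) \<in> E" using admissible_signal_switch[OF admissible True] c(2) by simp
    then have "V (\<sigma> s) (x s) \<le> \<mu> c (\<sigma> s) * V c (x s)" by (rule V_jump)
    also have "\<dots> \<le> \<mu> c (\<sigma> s) * (C * exp (exponent s - jump))"
      using Vc \<mu>_pos[OF E] by (intro mult_left_mono) auto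
    also have "\<dots> = C * exp (exponent s)"
      using \<mu>_pos[OF E] True by (simp add: jump_def exp_diff)
    finally show ?thesis .
  next
    case False
    then have "\<sigma> s = c" using c(2) s by (simp add: is_switch_def)
    then show ?thesis using Vc False by (simp add: jump_def)
  qed
qed

theorem lyapunov_estimate:
  assumes sol: "switched_solution f \<sigma> x0 x" and t: "0 \<le> t"
  shows "V (\<sigma> t) (x t) \<le> V (\<sigma> 0) x0 * exp (exponent t)"
proof (rule real_continuous_induct[OF t])
  show "V (\<sigma> 0) (x 0) \<le> V (\<sigma> 0) x0 * exp (exponent 0)"
    using sol by (simp add: switched_solution_def)
next
  fix s assume "0 < s" "s \<le> t" "\<forall>u\<in>{0..<s}. V (\<sigma> u) (x u) \<le> V (\<sigma> 0) x0 * exp (exponent u)"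
  then show "V (\<sigma> s) (x s) \<le> V (\<sigma> 0) x0 * exp (exponent s)"
    by (intro lyapunov_left_step[OF sol]) auto
next
  fix s assume s: "0 \<le> s" "\<forall>u\<in>{0..s}. V (\<sigma> u) (x u) \<le> V (\<sigma> 0) x0 * exp (exponent u)"
  obtain e where e: "e > 0" "\<forall>u\<in>{s<..s + e}. V (\<sigma> u) (x u) \<le> V (\<sigma> s) (x s) * exp (exponent u - exponent s)"
    using lyapunov_right_step[OF sol s(1)] by blast
  have "V (\<sigma> u) (x u) \<le> V (\<sigma> 0) x0 * exp (exponent u)" if u: "u \<in> {s<..s + e}" for u
  proof -
    have "V (\<sigma> u) (x u) \<le> V (\<sigma> s) (x s) * exp (exponent u - exponent s)" using e(2) u by blast
    also have "\<dots> \<le> V (\<sigma> 0) x0 * exp (exponent s) * exp (exponent u - exponent s)"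
      using s by (intro mult_right_mono) auto
    finally show ?thesis by (simp add: mult.assoc flip: exp_add)
  qed
  then show "\<exists>e>0. \<forall>u\<in>{s<..s + e}. V (\<sigma> u) (x u) \<le> V (\<sigma> 0) x0 * exp (exponent u)"
    using e(1) by blast
qed


theorem GAS_if_exponent_rate_negative:
  assumes K: "class_Kinf \<alpha>l" "class_Kinf \<alpha>u"
    and sandwich: "\<And>i \<xi>. i \<in> P \<Longrightarrow> \<alpha>l (norm \<xi>) \<le> V i \<xi> \<and> V i \<xi> \<le> \<alpha>u (norm \<xi>)"
    and rate: "Limsup at_top (\<lambda>t. ereal (exponent t / t)) < 0"
  shows "GAS f \<sigma>"
proof -
  have "\<exists>M. \<forall>t\<in>{0..T}. exponent t \<le> M" for T
    using switching_exponent_le[OF admissible, of _ T \<mu> lam] by (intro exI) auto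
  with rate obtain c K where c: "0 < c" and decay: "\<And>t. 0 \<le> t \<Longrightarrow> exponent t \<le> K - c * t"
    using linear_decay_if_Limsup_negative by blast
  show ?thesis
  proof (rule GAS_if_exponential_bound[OF K c])
    fix x0 x and t :: real assume sol: "switched_solution f \<sigma> x0 x" and t: "0 \<le> t"
    have modes: "\<sigma> 0 \<in> P" "\<sigma> t \<in> P" using admissible_signal_in[OF admissible] t by auto
    have "\<alpha>l (norm (x t)) \<le> V (\<sigma> t) (x t)" using sandwich modes by blast
    also have "\<dots> \<le> V (\<sigma> 0) x0 * exp (exponent t)" by (rule lyapunov_estimate[OF sol t])
    also have "\<dots> \<le> \<alpha>u (norm x0) * exp (exponent t)" using sandwich modes by simp
    also have "\<dots> \<le> \<alpha>u (norm x0) * exp (K - c * t)"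
      using decay[OF t] class_K_nonneg[of \<alpha>u "norm x0"] K(2)
      by (intro mult_left_mono) (auto simp: class_Kinf_def)
    finally show "\<alpha>l (norm (x t)) \<le> \<alpha>u (norm x0) * exp (K - c * t)" .
  qed
qed
end

theorem theorem5:
  fixes N :: nat
    and f :: "nat \<Rightarrow> 'a::euclidean_space \<Rightarrow> 'a"
    and PS PU :: "nat set"
    and E :: "(nat \<times> nat) set"
    and \<alpha>l \<alpha>u :: "real \<Rightarrow> real"
    and V :: "nat \<Rightarrow> 'a \<Rightarrow> real"
    and lam :: "nat \<Rightarrow> real"
    and \<mu> :: "nat \<Rightarrow> nat \<Rightarrow> real"
    and \<sigma> :: "real \<Rightarrow> nat"
  assumes lip: "\<forall>i\<in>{1..N}. \<exists>L. L-lipschitz_on UNIV (f i)"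
    and f0: "\<forall>i\<in>{1..N}. f i 0 = 0"
    and part: "PS \<union> PU = {1..N}" "PS \<inter> PU = {}"
    and E_sub: "E \<subseteq> {1..N} \<times> {1..N}"
    and A1_K: "class_Kinf \<alpha>l" "class_Kinf \<alpha>u"
    and A1_C1: "\<forall>i\<in>{1..N}. \<exists>D :: 'a \<Rightarrow> ('a \<Rightarrow>\<^sub>L real).
                   (\<forall>\<xi>. (V i has_derivative blinfun_apply (D \<xi>)) (at \<xi>)) \<and> continuous_on UNIV D"
    and A1_nonneg: "\<forall>i\<in>{1..N}. \<forall>\<xi>. V i \<xi> \<ge> 0"
    and A1_lamS: "\<forall>i\<in>PS. lam i > 0"
    and A1_lamU: "\<forall>i\<in>PU. lam i < 0"
    and A1_sandwich: "\<forall>i\<in>{1..N}. \<forall>\<xi>. \<alpha>l (norm \<xi>) \<le> V i \<xi> \<and> V i \<xi> \<le> \<alpha>u (norm \<xi>)"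
    and A1_decay: "\<forall>i\<in>{1..N}. \<forall>\<gamma>. ode_solution (f i) \<gamma> \<longrightarrow>
                    (\<forall>t\<ge>0. V i (\<gamma> t) \<le> V i (\<gamma> 0) * exp (- lam i * t))"
    and A2: "\<forall>(i,j)\<in>E. \<mu> i j \<ge> 1 \<and> (\<forall>\<xi>. V j \<xi> \<le> \<mu> i j * V i \<xi>)"
    and adm: "admissible_signal {1..N} E \<sigma>"
    and cond: "Limsup at_top (\<lambda>t. ereal
                 (switch_freq \<sigma> t * (\<Sum>(k,l)\<in>E. ln (\<mu> k l) * trans_freq \<sigma> k l t)
                  - (\<Sum>j\<in>PS. \<bar>lam j\<bar> * activation_frac \<sigma> j t)
                  + (\<Sum>k\<in>PU. \<bar>lam k\<bar> * activation_frac \<sigma> k t))) < 0"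
  shows "GAS f \<sigma>"
proof -
  from bchoice[OF A1_C1] obtain D where D: "\<And>i \<xi>. i \<in> {1..N} \<Longrightarrow>
      (V i has_derivative blinfun_apply (D i \<xi>)) (at \<xi>)" by blast
  interpret switched_lyapunov "{1..N}" E \<sigma> f V "\<lambda>i \<xi>. blinfun_apply (D i \<xi>)" lam \<mu>
  proof
    show "finite E" using E_sub by (rule finite_subset) simp
    fix i \<xi> assume i: "i \<in> {1..N}"
    obtain L where "L-lipschitz_on UNIV (f i)" using lip i by blast
    from derivative_bound_if_decay_along_solutions[OF D[OF i] lipschitz_ode_solution_exists[OF this]]
    show "blinfun_apply (D i \<xi>) (f i \<xi>) \<le> - lam i * V i \<xi>" using A1_decay i by blast
  next
    fix i j assume "(i, j) \<in> E"
    then show "\<And>\<xi>. V j \<xi> \<le> \<mu> i j * V i \<xi>" and "0 < \<mu> i j" using A2 by auto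
  qed (use adm D in simp_all)
  have "eventually (\<lambda>t. ereal (exponent t / t) = ereal
      (switch_freq \<sigma> t * (\<Sum>(k, l)\<in>E. ln (\<mu> k l) * trans_freq \<sigma> k l t)
        - (\<Sum>j\<in>PS. \<bar>lam j\<bar> * activation_frac \<sigma> j t) + (\<Sum>k\<in>PU. \<bar>lam k\<bar> * activation_frac \<sigma> k t))) at_top"
    (is "eventually (\<lambda>t. ?rate t = ?cond t) _")
    using eventually_gt_at_top[of 0]
    by eventually_elim (simp add: switching_exponent_rate[OF adm _ part _ A1_lamS A1_lamU])
  then have "Limsup at_top ?rate = Limsup at_top ?cond" by (rule Limsup_eq)
  with cond show ?thesis
    using GAS_if_exponent_rate_negative[OF A1_K] A1_sandwich by simp
qed

end
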